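(* Let $H=(L\uplus R,E_H)$ be a bipartite graph and $\alpha>1$ a real number such that $|N_H(A)|\ge\alpha|A|$ for every $A\subseteq L$. Let $F\subseteq E_H$ be a matching in which not all vertices of $L$ are matched. Then there is an augmenting path with respect to $F$ of length at most $2D+1$, where $D=\lfloor\log_\alpha|L|\rfloor+1$.
   Context: $N_H(A)$ denotes the set of vertices adjacent in $H$ to some vertex of $A$. An augmenting path with respect to a matching $F$ is a path starting at an unmatched vertex of $L$, ending at an unmatched vertex of $R$, whose edges alternate between edges not in $F$ and edges in $F$. *)

theory Defs
  imports Complex_Main
begin

definition bipartite_graph :: "'a set \<Rightarrow> 'a set \<Rightarrow> ('a \<times> 'a) set \<Rightarrow> bool" where
  "bipartite_graph L R E \<longleftrightarrow> finite L \<and> finite R \<and> L \<inter> R = {} \<and> E \<subseteq> L \<times> R"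

definition nbhd :: "('a \<times> 'a) set \<Rightarrow> 'a set \<Rightarrow> 'a set" where
  "nbhd E A = {v. \<exists>u\<in>A. (u, v) \<in> E \<or> (v, u) \<in> E}"

definition is_matching :: "('a \<times> 'a) set \<Rightarrow> ('a \<times> 'a) set \<Rightarrow> bool" where
  "is_matching E F \<longleftrightarrow> F \<subseteq> E \<and>
     (\<forall>e1\<in>F. \<forall>e2\<in>F. (fst e1 = fst e2 \<or> snd e1 = snd e2 \<or> fst e1 = snd e2 \<or> snd e1 = fst e2) \<longrightarrow> e1 = e2)"

definition matched :: "('a \<times> 'a) set \<Rightarrow> 'a \<Rightarrow> bool" where
  "matched F v \<longleftrightarrow> (\<exists>e\<in>F. v = fst e \<or> v = snd e)"

definition joined :: "('a \<times> 'a) set \<Rightarrow> 'a \<Rightarrow> 'a \<Rightarrow> bool" where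
  "joined X u v \<longleftrightarrow> (u, v) \<in> X \<or> (v, u) \<in> X"

definition augmenting_path ::
  "'a set \<Rightarrow> 'a set \<Rightarrow> ('a \<times> 'a) set \<Rightarrow> ('a \<times> 'a) set \<Rightarrow> 'a list \<Rightarrow> bool" where
  "augmenting_path L R E F p \<longleftrightarrow>
     length p \<ge> 2 \<and> distinct p \<and>
     hd p \<in> L \<and> \<not> matched F (hd p) \<and>
     last p \<in> R \<and> \<not> matched F (last p) \<and>
     (\<forall>i < length p - 1. joined E (p ! i) (p ! Suc i) \<and>
        (if even i then \<not> joined F (p ! i) (p ! Suc i) else joined F (p ! i) (p ! Suc i)))"

definition path_length :: "'a list \<Rightarrow> nat" where
  "path_length p = length p - 1"

end

theory Submission
  imports Defs
begin

text \<open>Search from an unmatched vertex \<open>u \<in> L\<close> along alternating paths, and let \<open>T\<^sub>k\<close> be the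
  set of vertices of \<open>L\<close> reachable from \<open>u\<close> by an alternating path with at most \<open>2k\<close> edges.
  If there is no augmenting path of length at most \<open>2k + 1\<close>, then every neighbour \<open>r\<close> of \<open>T\<^sub>k\<close>
  is matched and its partner lies in \<open>T\<^sub>k\<^sub>+\<^sub>1\<close>; distinct vertices have distinct partners, so the
  expansion hypothesis gives \<open>|T\<^sub>k\<^sub>+\<^sub>1| \<ge> \<alpha> |T\<^sub>k|\<close>. Hence \<open>|L| \<ge> |T\<^sub>D| \<ge> \<alpha>\<^sup>D > |L|\<close>.\<close>

lemma joined_sym: "joined X a b \<longleftrightarrow> joined X b a"
  unfolding joined_def by auto

lemma matched_iff_joined: "matched F a \<longleftrightarrow> (\<exists>b. joined F a b)"
  unfolding matched_def joined_def by force

lemma joined_imp_matched: "joined F a b \<Longrightarrow> matched F a"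
  unfolding matched_iff_joined by blast

lemma matching_joined_imp_joined:
  "is_matching E F \<Longrightarrow> joined F a b \<Longrightarrow> joined E a b"
  unfolding is_matching_def joined_def by blast

lemma matching_joined_unique:
  "is_matching E F \<Longrightarrow> joined F a b \<Longrightarrow> joined F a c \<Longrightarrow> b = c"
  unfolding is_matching_def joined_def by (metis fst_conv snd_conv)

lemma bipartite_graph_joined:
  "bipartite_graph L R E \<Longrightarrow> joined E a b \<Longrightarrow> a \<in> L \<and> b \<in> R \<or> a \<in> R \<and> b \<in> L"
  unfolding bipartite_graph_def joined_def by blast

definition alternating :: "('a \<times> 'a) set \<Rightarrow> ('a \<times> 'a) set \<Rightarrow> 'a list \<Rightarrow> bool" where
  "alternating E F p \<longleftrightarrow>
     (\<forall>i < length p - 1. joined E (p ! i) (p ! Suc i) \<and> (joined F (p ! i) (p ! Suc i) \<longleftrightarrow> odd i))"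

lemma augmenting_path_iff_alternating:
  "augmenting_path L R E F p \<longleftrightarrow>
     2 \<le> length p \<and> distinct p \<and> hd p \<in> L \<and> \<not> matched F (hd p) \<and>
     last p \<in> R \<and> \<not> matched F (last p) \<and> alternating E F p"
  unfolding augmenting_path_def alternating_def by auto

lemma alternating_take: "alternating E F p \<Longrightarrow> alternating E F (take n p)"
  unfolding alternating_def by auto

lemma alternating_snoc:
  "alternating E F (p @ [y]) \<longleftrightarrow> alternating E F p \<and>
     (p \<noteq> [] \<longrightarrow> joined E (last p) y \<and> (joined F (last p) y \<longleftrightarrow> odd (length p - 1)))"
proof (cases p rule: rev_cases)
  case (snoc q x)
  have "(\<forall>i < Suc (length q). P i) \<longleftrightarrow> (\<forall>i < length q. P i) \<and> P (length q)" for P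
    by (auto simp: less_Suc_eq)
  then show ?thesis
    unfolding snoc alternating_def by (simp add: nth_append)
qed (simp add: alternating_def)

definition has_augmenting_path_within ::
  "'a set \<Rightarrow> 'a set \<Rightarrow> ('a \<times> 'a) set \<Rightarrow> ('a \<times> 'a) set \<Rightarrow> nat \<Rightarrow> bool" where
  "has_augmenting_path_within L R E F n \<longleftrightarrow> (\<exists>p. augmenting_path L R E F p \<and> path_length p \<le> n)"

lemma has_augmenting_path_within_mono:
  "has_augmenting_path_within L R E F m \<Longrightarrow> m \<le> n \<Longrightarrow> has_augmenting_path_within L R E F n"
  unfolding has_augmenting_path_within_def by auto

locale alternating_search =
  fixes L R :: "'a set" and E F :: "('a \<times> 'a) set" and u :: 'a
  assumes bipartite: "bipartite_graph L R E" and matching: "is_matching E F"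
    and start_in_L: "u \<in> L" and start_unmatched: "\<not> matched F u"
begin

definition alt_path :: "'a list \<Rightarrow> bool" where
  "alt_path p \<longleftrightarrow> p \<noteq> [] \<and> distinct p \<and> hd p = u \<and> alternating E F p"

definition reach :: "nat \<Rightarrow> 'a set" where
  "reach k = {x \<in> L. \<exists>p. alt_path p \<and> last p = x \<and> length p \<le> 2 * k + 1}"

definition mate :: "'a \<Rightarrow> 'a" where
  "mate r = (SOME y. joined F r y)"

lemma joined_mate: "matched F r \<Longrightarrow> joined F r (mate r)"
  unfolding mate_def matched_iff_joined by (rule someI_ex)

lemma mate_eqI:
  assumes "joined F r y" shows "mate r = y"
  using matching_joined_unique[OF matching joined_mate[OF joined_imp_matched[OF assms]] assms] .

lemma disjoint_L_R: "L \<inter> R = {}"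
  using bipartite unfolding bipartite_graph_def by blast

lemma alt_path_nth_0: "alt_path p \<Longrightarrow> p ! 0 = u"
  unfolding alt_path_def by (metis hd_conv_nth)

lemma alt_path_nth_mem:
  "alt_path p \<Longrightarrow> i < length p \<Longrightarrow> p ! i \<in> (if even i then L else R)"
proof (induction i)
  case 0
  then show ?case using start_in_L alt_path_nth_0 by simp
next
  case (Suc i)
  then have "joined E (p ! i) (p ! Suc i)" unfolding alt_path_def alternating_def by simp
  then have "p ! i \<in> L \<and> p ! Suc i \<in> R \<or> p ! i \<in> R \<and> p ! Suc i \<in> L"
    using bipartite_graph_joined[OF bipartite] by blast
  with Suc disjoint_L_R show ?case by auto
qed

lemma alt_path_nth_in_L_iff: "alt_path p \<Longrightarrow> i < length p \<Longrightarrow> p ! i \<in> L \<longleftrightarrow> even i"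
  using alt_path_nth_mem[of p i] disjoint_L_R by (cases "even i") auto

lemma alt_path_joined_even_vertex:
  assumes p: "alt_path p" and i: "i < length p" "even i" and y: "joined F (p ! i) y"
  shows "0 < i \<and> y = p ! (i - 1)"
proof (cases i)
  case 0
  then have "p ! i = u" using p alt_path_nth_0 by simp
  then show ?thesis using joined_imp_matched[OF y] start_unmatched by simp
next
  case (Suc j)
  then have "joined F (p ! j) (p ! i)" using p i unfolding alt_path_def alternating_def by auto
  then have "y = p ! j" using y matching_joined_unique[OF matching] joined_sym by metis
  then show ?thesis using Suc by simp
qed

lemma reach_subset_L: "reach k \<subseteq> L"
  unfolding reach_def by blast

lemma finite_reach: "finite (reach k)"
  using bipartite reach_subset_L unfolding bipartite_graph_def by (blast intro: finite_subset)

lemma start_in_reach: "u \<in> reach k"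
proof -
  have "alt_path [u]" unfolding alt_path_def alternating_def by simp
  then show ?thesis unfolding reach_def using start_in_L by force
qed

lemma alt_path_take: "alt_path p \<Longrightarrow> 0 < n \<Longrightarrow> alt_path (take n p)"
  unfolding alt_path_def by (simp add: alternating_take)

lemma alt_path_snoc_non_matching_edge:
  assumes p: "alt_path p" and last_L: "last p \<in> L"
    and r: "joined E (last p) r" "r \<notin> set p"
  shows "alt_path (p @ [r])"
proof -
  define n where "n = length p - 1"
  have n: "n < length p" "p ! n = last p"
    using p unfolding alt_path_def n_def by (simp_all add: last_conv_nth)
  then have "even n" using alt_path_nth_in_L_iff[OF p n(1)] last_L by simp
  have "\<not> joined F (last p) r"
  proof
    assume "joined F (last p) r"
    then have "r = p ! (n - 1)"
      using alt_path_joined_even_vertex[OF p n(1) \<open>even n\<close>] n(2) by simp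
    with n(1) r(2) show False by simp
  qed
  then show ?thesis
    using p r \<open>even n\<close> unfolding alt_path_def n_def by (simp add: alternating_snoc)
qed

lemma alt_path_snoc_mate:
  assumes p: "alt_path p" and last_R: "last p \<in> R" and r: "matched F (last p)"
  shows "alt_path (p @ [mate (last p)])"
proof -
  define n where "n = length p - 1"
  define y where "y = mate (last p)"
  have n: "n < length p" "p ! n = last p"
    using p unfolding alt_path_def n_def by (simp_all add: last_conv_nth)
  then have "odd n" using alt_path_nth_in_L_iff[OF p n(1)] last_R disjoint_L_R by auto
  have y: "joined F (last p) y" unfolding y_def using joined_mate[OF r] .
  have "y \<notin> set p"
  proof
    assume "y \<in> set p"
    then obtain j where j: "j < length p" "p ! j = y" by (auto simp: in_set_conv_nth)
    have "y \<in> L"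
      using bipartite_graph_joined[OF bipartite matching_joined_imp_joined[OF matching y]]
        last_R disjoint_L_R by blast
    then have "even j" using alt_path_nth_in_L_iff[OF p] j by blast
    then have "0 < j" "p ! (j - 1) = p ! n"
      using alt_path_joined_even_vertex[OF p j(1)] y j(2) n(2) joined_sym by metis+
    then have "j - 1 = n"
      using p j(1) n(1) unfolding alt_path_def by (simp add: nth_eq_iff_index_eq)
    with j(1) \<open>0 < j\<close> show False unfolding n_def by simp
  qed
  then show ?thesis
    using p y \<open>odd n\<close> matching_joined_imp_joined[OF matching]
    unfolding alt_path_def n_def y_def by (simp add: alternating_snoc)
qed

lemma mate_on_alt_path_in_reach:
  assumes p: "alt_path p" "length p \<le> 2 * k + 1" and i: "odd i" "Suc i < length p"
  shows "matched F (p ! i) \<and> mate (p ! i) \<in> reach k"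
proof -
  have "joined F (p ! i) (p ! Suc i)"
    using p(1) i unfolding alt_path_def alternating_def by auto
  then have "matched F (p ! i)" "mate (p ! i) = p ! Suc i"
    by (rule joined_imp_matched, rule mate_eqI)
  moreover have "alt_path (take (Suc (Suc i)) p)" using alt_path_take[OF p(1)] by simp
  moreover have "last (take (Suc (Suc i)) p) = p ! Suc i"
    using i(2) by (simp add: take_Suc_conv_app_nth)
  moreover have "p ! Suc i \<in> L" using alt_path_nth_in_L_iff[OF p(1) i(2)] i(1) by simp
  ultimately show ?thesis using p(2) unfolding reach_def by fastforce
qed

lemma mate_of_neighbour_in_reach:
  assumes x: "x \<in> reach k" "joined E x r"
    and no_aug: "\<not> has_augmenting_path_within L R E F (2 * k + 1)"
  shows "matched F r \<and> mate r \<in> reach (Suc k)"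
proof -
  obtain p where p: "alt_path p" "last p = x" "length p \<le> 2 * k + 1" and "x \<in> L"
    using x(1) unfolding reach_def by blast
  have "r \<in> R" using bipartite_graph_joined[OF bipartite x(2)] \<open>x \<in> L\<close> disjoint_L_R by blast
  show ?thesis
  proof (cases "r \<in> set p")
    case True
    then obtain i where i: "i < length p" "p ! i = r" by (auto simp: in_set_conv_nth)
    have "odd i" using alt_path_nth_in_L_iff[OF p(1) i(1)] i(2) \<open>r \<in> R\<close> disjoint_L_R by blast
    moreover have "i \<noteq> length p - 1"
      using i(2) p(1,2) \<open>x \<in> L\<close> \<open>r \<in> R\<close> disjoint_L_R unfolding alt_path_def
      by (auto simp: last_conv_nth)
    ultimately show ?thesis
      using mate_on_alt_path_in_reach[OF p(1), of "Suc k" i] p(3) i by auto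
  next
    case False
    then have q: "alt_path (p @ [r])"
      using alt_path_snoc_non_matching_edge[OF p(1)] p(2) \<open>x \<in> L\<close> x(2) by simp
    have "matched F r"
    proof (rule ccontr)
      assume "\<not> matched F r"
      then have "augmenting_path L R E F (p @ [r])"
        using q \<open>r \<in> R\<close> start_in_L start_unmatched p(1)
        unfolding augmenting_path_iff_alternating alt_path_def by (auto simp: Suc_le_eq)
      moreover have "path_length (p @ [r]) \<le> 2 * k + 1"
        using p(3) unfolding path_length_def by simp
      ultimately show False using no_aug unfolding has_augmenting_path_within_def by blast
    qed
    then have "alt_path (p @ [r, mate r])"
      using alt_path_snoc_mate[OF q] \<open>r \<in> R\<close> by simp
    moreover have "mate r \<in> L"
      using bipartite_graph_joined[OF bipartite matching_joined_imp_joined[OF matching]]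
        joined_mate[OF \<open>matched F r\<close>] \<open>r \<in> R\<close> disjoint_L_R by blast
    ultimately show ?thesis
      using \<open>matched F r\<close> p(3) unfolding reach_def by fastforce
  qed
qed

lemma card_reach_Suc:
  assumes expansion: "\<forall>A. A \<subseteq> L \<longrightarrow> real (card (nbhd E A)) \<ge> \<alpha> * real (card A)"
    and no_aug: "\<not> has_augmenting_path_within L R E F (2 * k + 1)"
  shows "\<alpha> * real (card (reach k)) \<le> real (card (reach (Suc k)))"
proof -
  define N where "N = nbhd E (reach k)"
  have N: "matched F r \<and> mate r \<in> reach (Suc k)" if "r \<in> N" for r
    using that mate_of_neighbour_in_reach[OF _ _ no_aug]
    unfolding N_def nbhd_def joined_def by blast
  have "inj_on mate N"
  proof (rule inj_onI)
    fix a b assume "a \<in> N" "b \<in> N" "mate a = mate b"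
    then have "joined F (mate a) a" "joined F (mate a) b"
      using N joined_mate joined_sym by metis+
    then show "a = b" using matching_joined_unique[OF matching] by blast
  qed
  then have "card N \<le> card (reach (Suc k))"
    using N finite_reach by (metis card_image card_mono image_subsetI)
  moreover have "\<alpha> * real (card (reach k)) \<le> real (card N)"
    using expansion reach_subset_L unfolding N_def by blast
  ultimately show ?thesis by linarith
qed

lemma card_reach_ge_power:
  assumes "0 \<le> \<alpha>"
    and expansion: "\<forall>A. A \<subseteq> L \<longrightarrow> real (card (nbhd E A)) \<ge> \<alpha> * real (card A)"
    and no_aug: "\<not> has_augmenting_path_within L R E F (2 * D + 1)"
  shows "k \<le> D \<Longrightarrow> \<alpha> ^ k \<le> real (card (reach k))"
proof (induction k)
  case 0
  have "reach 0 \<noteq> {}" using start_in_reach by blast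
  then show ?case using finite_reach by (simp add: Suc_le_eq card_gt_0_iff)
next
  case (Suc k)
  have "\<not> has_augmenting_path_within L R E F (2 * k + 1)"
    using no_aug Suc.prems has_augmenting_path_within_mono by fastforce
  then have "\<alpha> * real (card (reach k)) \<le> real (card (reach (Suc k)))"
    using card_reach_Suc[OF expansion] by blast
  moreover have "\<alpha> * \<alpha> ^ k \<le> \<alpha> * real (card (reach k))"
    using Suc \<open>0 \<le> \<alpha>\<close> by (simp add: mult_left_mono)
  ultimately show ?case by simp
qed

end

lemma less_power_Suc_nat_floor_log:
  fixes b x :: real
  assumes "1 < b" "1 \<le> x"
  shows "x < b ^ Suc (nat \<lfloor>log b x\<rfloor>)"
proof -
  have "0 \<le> \<lfloor>log b x\<rfloor>" using assms by simp
  have "x < b powr real_of_int (\<lfloor>log b x\<rfloor> + 1)"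
    using floor_log_eq_powr_iff[of x b "\<lfloor>log b x\<rfloor>"] assms by simp
  also have "real_of_int (\<lfloor>log b x\<rfloor> + 1) = real (Suc (nat \<lfloor>log b x\<rfloor>))"
    using \<open>0 \<le> \<lfloor>log b x\<rfloor>\<close> by simp
  also have "b powr real (Suc (nat \<lfloor>log b x\<rfloor>)) = b ^ Suc (nat \<lfloor>log b x\<rfloor>)"
    using assms by (simp only: powr_realpow)
  finally show ?thesis .
qed

theorem lemma6:
  fixes L R :: "'a set" and E F :: "('a \<times> 'a) set" and \<alpha> :: real
  assumes "bipartite_graph L R E"
    and "\<alpha> > 1"
    and "\<forall>A. A \<subseteq> L \<longrightarrow> real (card (nbhd E A)) \<ge> \<alpha> * real (card A)"
    and "is_matching E F"
    and "\<exists>v\<in>L. \<not> matched F v"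
  shows "\<exists>p. augmenting_path L R E F p \<and>
           int (path_length p) \<le> 2 * (\<lfloor>log \<alpha> (real (card L))\<rfloor> + 1) + 1"
proof (rule ccontr)
  assume no_aug: "\<not> ?thesis"
  obtain u where "u \<in> L" "\<not> matched F u" using assms(5) by blast
  interpret alternating_search L R E F u
    using assms(1,4) \<open>u \<in> L\<close> \<open>\<not> matched F u\<close> by unfold_locales
  define D where "D = Suc (nat \<lfloor>log \<alpha> (real (card L))\<rfloor>)"
  have "finite L" using assms(1) unfolding bipartite_graph_def by simp
  with \<open>u \<in> L\<close> have "1 \<le> card L" by (auto simp: Suc_le_eq card_gt_0_iff)
  then have "int D = \<lfloor>log \<alpha> (real (card L))\<rfloor> + 1"
    using assms(2) unfolding D_def by simp
  then have "\<not> has_augmenting_path_within L R E F (2 * D + 1)"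
    using no_aug unfolding has_augmenting_path_within_def by fastforce
  then have "\<alpha> ^ D \<le> real (card (reach D))"
    using card_reach_ge_power assms(2,3) by simp
  also have "\<dots> \<le> real (card L)"
    using \<open>finite L\<close> reach_subset_L by (simp add: card_mono)
  also have "\<dots> < \<alpha> ^ D"
    using less_power_Suc_nat_floor_log assms(2) \<open>1 \<le> card L\<close> unfolding D_def by simp
  finally show False by simp
qed

end
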